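(* Let $\mathbf x\in\mathbb R^p_+$ and let $x_i,x_j$ be two of its components with $x_i>x_j$. Let $\varepsilon\in(0,(x_i-x_j)/2)$ and let $\mathbf z\in\mathbb R^p_+$ be defined by $z_i=x_i-\varepsilon$, $z_j=x_j+\varepsilon$, and $z_k=x_k$ for $k\ne i,j$. Let $\mathbf w$ satisfy $w_1\ge w_2\ge\cdots\ge w_p\ge0$, and let $\Delta=\min\{w_l-w_{l+1}: l=1,\dots,p-1\}$. Then $$\Omega_{\mathbf w}(\mathbf x)-\Omega_{\mathbf w}(\mathbf z)\ge\Delta\,\varepsilon.$$
   Context: $\Omega_{\mathbf w}(\mathbf x)=\sum_{i=1}^p w_i|x|_{[i]}$, where $|x|_{[i]}$ denotes the $i$-th largest component of $\mathbf x$ in magnitude. *)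

theory Defs
  imports Complex_Main
begin

text \<open>Vectors in R^p are functions nat => real, components indexed 1..p.
  sorted_abs p x lists |x_1|,...,|x_p| in non-increasing order, so
  |x|_[i] = sorted_abs p x ! (i-1).\<close>

definition sorted_abs :: "nat \<Rightarrow> (nat \<Rightarrow> real) \<Rightarrow> real list" where
  "sorted_abs p x = rev (sort (map (\<lambda>k. \<bar>x k\<bar>) [1..<p+1]))"

definition owl :: "nat \<Rightarrow> (nat \<Rightarrow> real) \<Rightarrow> (nat \<Rightarrow> real) \<Rightarrow> real" where
  "owl p w x = (\<Sum>i=1..p. w i * (sorted_abs p x ! (i - 1)))"

end

theory Submission
  imports Defs "HOL-Library.Multiset"
begin

text \<open>Let T_l(y) be the sum of the l largest entries of y. Summation by parts gives
  Omega_w(y) = sum_{l<p} (w_l - w_{l+1}) T_l(y) + w_p T_p(y) with nonnegative coefficients, and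
  T_l(y) = min_t (l t + sum_k (y_k - t)_+), the minimum being attained at every t separating the
  l largest entries from the others. Moving mass eps from x_i to x_j without crossing lowers each
  excess sum_k (y_k - t)_+ by convexity, so T_l(z) <= T_l(x) for all l. At the level t = x_j + eps
  the excess drops by exactly eps, so for the number L of entries of x above that level
  (1 <= L < p) we get T_L(x) - T_L(z) >= eps.\<close>

lemma sum_by_parts_partial_sums:
  fixes w a :: "nat \<Rightarrow> 'a::comm_ring"
  shows "(\<Sum>i=1..n. w i * a (i - 1)) =
    (\<Sum>l\<in>{1..<n}. (w l - w (l + 1)) * (\<Sum>m<l. a m)) + w n * (\<Sum>m<n. a m)"
proof (induction n)
  case 0
  then show ?case by simp
next
  case (Suc n)
  show ?case
  proof (cases "n = 0")
    case False
    then have "{1..<Suc n} = insert n {1..<n}" by auto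
    then show ?thesis using Suc by (simp add: algebra_simps)
  qed simp
qed

lemma sorted_desc_nth_mono:
  assumes "a \<le> b" "b < length ys"
  shows "rev (sort ys) ! b \<le> rev (sort ys) ! a"
  using assms by (simp add: rev_nth sorted_nth_mono)

definition top_sum :: "nat \<Rightarrow> real list \<Rightarrow> real" where
  "top_sum l ys = (\<Sum>m<l. rev (sort ys) ! m)"

definition excess :: "real \<Rightarrow> real list \<Rightarrow> real" where
  "excess t ys = (\<Sum>y\<leftarrow>ys. max (y - t) 0)"

lemma excess_rev_sort [simp]: "excess t (rev (sort ys)) = excess t ys"
proof -
  have "mset (map (\<lambda>y. max (y - t) 0) (rev (sort ys))) = mset (map (\<lambda>y. max (y - t) 0) ys)"
    by simp
  then show ?thesis unfolding excess_def by (metis sum_mset_sum_list)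
qed

lemma excess_eq_sum_nth: "excess t ys = (\<Sum>m<length ys. max (ys ! m - t) 0)"
  by (simp add: excess_def sum_list_sum_nth lessThan_atLeast0)

lemma owl_eq_top_sums:
  "owl p w x = (\<Sum>l\<in>{1..<p}. (w l - w (l + 1)) * top_sum l (map (\<lambda>k. \<bar>x k\<bar>) [1..<p+1]))
     + w p * top_sum p (map (\<lambda>k. \<bar>x k\<bar>) [1..<p+1])"
  unfolding owl_def sorted_abs_def top_sum_def by (rule sum_by_parts_partial_sums)

lemma top_sum_le_excess:
  assumes "l \<le> length ys"
  shows "top_sum l ys \<le> l * t + excess t ys"
proof -
  let ?s = "rev (sort ys)"
  have "top_sum l ys \<le> (\<Sum>m<l. t + max (?s ! m - t) 0)"
    unfolding top_sum_def by (rule sum_mono) simp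
  also have "\<dots> = l * t + (\<Sum>m<l. max (?s ! m - t) 0)"
    by (simp add: sum.distrib)
  also have "(\<Sum>m<l. max (?s ! m - t) 0) \<le> (\<Sum>m<length ys. max (?s ! m - t) 0)"
    using assms by (intro sum_mono2) auto
  also have "\<dots> = excess t ys"
    using excess_eq_sum_nth[of t ?s] by simp
  finally show ?thesis by simp
qed

lemma top_sum_eq_excess:
  assumes "l \<le> length ys"
    and above: "\<forall>m<l. t \<le> rev (sort ys) ! m"
    and below: "\<forall>m\<in>{l..<length ys}. rev (sort ys) ! m \<le> t"
  shows "top_sum l ys = l * t + excess t ys"
proof -
  let ?s = "rev (sort ys)"
  have split: "{..<length ys} = {..<l} \<union> {l..<length ys}" using assms(1) by auto
  have "excess t ys = (\<Sum>m<l. max (?s ! m - t) 0) + (\<Sum>m\<in>{l..<length ys}. max (?s ! m - t) 0)"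
    using excess_eq_sum_nth[of t ?s] unfolding length_rev length_sort split
    by (subst (asm) sum.union_disjoint) auto
  also have "(\<Sum>m\<in>{l..<length ys}. max (?s ! m - t) 0) = 0"
    using below by (intro sum.neutral) auto
  also have "(\<Sum>m<l. max (?s ! m - t) 0) = (\<Sum>m<l. ?s ! m - t)"
    using above by (intro sum.cong) auto
  finally show ?thesis by (simp add: top_sum_def sum_subtractf)
qed

lemma top_sum_mono_of_excess_le:
  assumes "length zs = length ys" "\<And>t. excess t zs \<le> excess t ys" "l \<le> length ys"
  shows "top_sum l zs \<le> top_sum l ys"
proof (cases "l = 0")
  case True
  then show ?thesis by (simp add: top_sum_def)
next
  case False
  define t where "t = rev (sort ys) ! (l - 1)"
  have "top_sum l ys = l * t + excess t ys"
    using assms(3) False unfolding t_def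
    using sorted_desc_nth_mono[of _ "l - 1" ys] sorted_desc_nth_mono[of "l - 1" _ ys]
    by (intro top_sum_eq_excess) auto
  moreover have "top_sum l zs \<le> l * t + excess t zs"
    using assms(1,3) by (intro top_sum_le_excess) simp
  ultimately show ?thesis using assms(2)[of t] by linarith
qed

lemma threshold_index:
  assumes "a \<in> set ys" "t < a" "b \<in> set ys" "b \<le> t"
  obtains L where "L \<in> {1..<length ys}" "\<forall>m<L. t \<le> rev (sort ys) ! m"
    "\<forall>m\<in>{L..<length ys}. rev (sort ys) ! m \<le> t"
proof -
  let ?s = "rev (sort ys)"
  define L where "L = length (takeWhile (\<lambda>y. t < y) ?s)"
  have above: "t < ?s ! m" if "m < L" for m
    using that nth_mem[OF that[unfolded L_def]] set_takeWhileD
    unfolding L_def by (fastforce simp: takeWhile_nth)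
  obtain kb where kb: "kb < length ys" "?s ! kb = b"
    using assms(3) by (metis in_set_conv_nth length_rev length_sort set_rev set_sort)
  have "L < length ys"
    using above[of kb] kb assms(4) by (cases "kb < L") (auto simp: L_def)
  then have "\<not> t < ?s ! L"
    using nth_length_takeWhile[of "\<lambda>y. t < y" ?s] unfolding L_def by simp
  then have below: "\<forall>m\<in>{L..<length ys}. ?s ! m \<le> t"
    using sorted_desc_nth_mono[of L _ ys] by force
  obtain ka where ka: "ka < length ys" "?s ! ka = a"
    using assms(1) by (metis in_set_conv_nth length_rev length_sort set_rev set_sort)
  have "L \<noteq> 0"
  proof
    assume "L = 0"
    then have "?s ! ka \<le> t" using below ka(1) by simp
    with ka(2) assms(2) show False by simp
  qed
  with \<open>L < length ys\<close> have "L \<in> {1..<length ys}" by simp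
  moreover have "\<forall>m<L. t \<le> ?s ! m" using above by (simp add: less_imp_le)
  ultimately show ?thesis using below by (rule that)
qed

lemma top_sum_gap_at_level:
  assumes "length zs = length ys" "excess t zs \<le> excess t ys - \<epsilon>"
    and "a \<in> set ys" "t < a" "b \<in> set ys" "b \<le> t"
  obtains L where "L \<in> {1..<length ys}" "\<epsilon> \<le> top_sum L ys - top_sum L zs"
proof -
  obtain L where L: "L \<in> {1..<length ys}" "\<forall>m<L. t \<le> rev (sort ys) ! m"
    "\<forall>m\<in>{L..<length ys}. rev (sort ys) ! m \<le> t"
    using threshold_index[OF assms(3-6)] .
  then have "top_sum L ys = L * t + excess t ys"
    by (intro top_sum_eq_excess) auto
  moreover have "top_sum L zs \<le> L * t + excess t zs"
    using L(1) assms(1) by (intro top_sum_le_excess) simp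
  ultimately show ?thesis using that L(1) assms(2) by force
qed

lemma excess_map_move_mass:
  assumes "distinct ks" "i \<in> set ks" "j \<in> set ks" "i \<noteq> j"
    and z: "z = (\<lambda>k. if k = i then x i - e else if k = j then x j + e else x k)"
  shows "excess t (map z ks) = excess t (map x ks)
    - (max (x i - t) 0 + max (x j - t) 0) + (max (x i - e - t) 0 + max (x j + e - t) 0)"
proof -
  have excess_sum: "excess t (map f ks) = max (f i - t) 0 + max (f j - t) 0
      + (\<Sum>k\<in>set ks - {i} - {j}. max (f k - t) 0)" for f
    using assms(1-4)
    by (simp add: excess_def sum_list_distinct_conv_sum_set sum.remove[of "set ks" i]
        sum.remove[of "set ks - {i}" j])
  have "(\<Sum>k\<in>set ks - {i} - {j}. max (z k - t) 0) = (\<Sum>k\<in>set ks - {i} - {j}. max (x k - t) 0)"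
    using z by (intro sum.cong) auto
  then show ?thesis
    unfolding excess_sum[of z] excess_sum[of x] using z assms(4) by simp
qed

lemma excess_move_mass_le:
  assumes "distinct ks" "i \<in> set ks" "j \<in> set ks" "i \<noteq> j"
    and "z = (\<lambda>k. if k = i then x i - e else if k = j then x j + e else x k)"
    and "0 \<le> e" "2 * e \<le> x i - x j"
  shows "excess t (map z ks) \<le> excess t (map x ks)"
  using excess_map_move_mass[OF assms(1-5), of t] assms(6,7) by (simp add: max_def)

lemma excess_move_mass_at_level:
  assumes "distinct ks" "i \<in> set ks" "j \<in> set ks" "i \<noteq> j"
    and "z = (\<lambda>k. if k = i then x i - e else if k = j then x j + e else x k)"
    and "0 \<le> e" "2 * e \<le> x i - x j"
  shows "excess (x j + e) (map z ks) = excess (x j + e) (map x ks) - e"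
  using excess_map_move_mass[OF assms(1-5), of "x j + e"] assms(6,7) by (simp add: max_def)

lemma Min_mult_le_sum_mult:
  fixes g d :: "'a \<Rightarrow> real"
  assumes "finite A" "L \<in> A" "\<forall>l\<in>A. 0 \<le> g l" "\<forall>l\<in>A. 0 \<le> d l" "\<epsilon> \<le> d L" "0 \<le> \<epsilon>"
  shows "Min (g ` A) * \<epsilon> \<le> (\<Sum>l\<in>A. g l * d l)"
proof -
  have "Min (g ` A) * \<epsilon> \<le> g L * d L"
    using assms by (intro mult_mono) auto
  also have "\<dots> \<le> (\<Sum>l\<in>A. g l * d l)"
    using assms(1-4) by (intro member_le_sum) auto
  finally show ?thesis .
qed

theorem lemma1:
  fixes p i j :: nat and x z w :: "nat \<Rightarrow> real" and \<epsilon> :: real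
  assumes x_nonneg: "\<forall>k\<in>{1..p}. x k \<ge> 0"
    and i: "i \<in> {1..p}" and j: "j \<in> {1..p}"
    and xij: "x i > x j"
    and eps_pos: "0 < \<epsilon>" and eps_lt: "\<epsilon> < (x i - x j) / 2"
    and z_def: "z = (\<lambda>k. if k = i then x i - \<epsilon> else if k = j then x j + \<epsilon> else x k)"
    and w_mono: "\<forall>l\<in>{1..<p}. w l \<ge> w (l + 1)"
    and w_nonneg: "w p \<ge> 0"
  shows "owl p w x - owl p w z \<ge> Min ((\<lambda>l. w l - w (l + 1)) ` {1..<p}) * \<epsilon>"
proof -
  define xs where "xs = map x [1..<p+1]"
  define zs where "zs = map z [1..<p+1]"
  have move: "distinct [1..<p+1]" "i \<in> set [1..<p+1]" "j \<in> set [1..<p+1]" "i \<noteq> j"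
    "0 \<le> \<epsilon>" "2 * \<epsilon> \<le> x i - x j"
    using i j xij eps_pos eps_lt by auto
  have "0 \<le> x j" using x_nonneg j by auto
  then have "\<forall>k\<in>{1..p}. 0 \<le> z k"
    using x_nonneg move(6) eps_pos by (auto simp: z_def)
  then have abs_eq: "map (\<lambda>k. \<bar>x k\<bar>) [1..<p+1] = xs" "map (\<lambda>k. \<bar>z k\<bar>) [1..<p+1] = zs"
    using x_nonneg by (auto simp: xs_def zs_def)
  have len: "length zs = length xs" "length xs = p" by (simp_all add: xs_def zs_def)
  obtain L where L: "L \<in> {1..<p}" "\<epsilon> \<le> top_sum L xs - top_sum L zs"
  proof (rule top_sum_gap_at_level[of zs xs "x j + \<epsilon>" \<epsilon> "x i" "x j"])
    show "excess (x j + \<epsilon>) zs \<le> excess (x j + \<epsilon>) xs - \<epsilon>"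
      using excess_move_mass_at_level[OF move(1-4) z_def move(5,6)] by (simp add: xs_def zs_def)
  qed (use len move eps_lt that in \<open>auto simp: xs_def\<close>)
  have mono: "top_sum l zs \<le> top_sum l xs" if "l \<le> p" for l
    using excess_move_mass_le[OF move(1-4) z_def move(5,6)] len that
    by (intro top_sum_mono_of_excess_le) (auto simp: xs_def zs_def)
  have "Min ((\<lambda>l. w l - w (l + 1)) ` {1..<p}) * \<epsilon>
      \<le> (\<Sum>l\<in>{1..<p}. (w l - w (l + 1)) * (top_sum l xs - top_sum l zs))"
    using L w_mono mono eps_pos by (intro Min_mult_le_sum_mult) auto
  moreover have "0 \<le> w p * (top_sum p xs - top_sum p zs)"
    using w_nonneg mono[of p] by simp
  moreover have "owl p w x - owl p w z =
      (\<Sum>l\<in>{1..<p}. (w l - w (l + 1)) * (top_sum l xs - top_sum l zs))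
      + w p * (top_sum p xs - top_sum p zs)"
    unfolding owl_eq_top_sums abs_eq by (simp add: right_diff_distrib sum_subtractf)
  ultimately show ?thesis by linarith
qed

end
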